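(* The maps $\psi_s : \mathbf{ASM}^\star \to \mathbb{K}(q)$ and $\psi_{s'} : \mathbf{ASM}^\star \to \mathbb{K}(q)$ linearly defined, for any $s \in \{\operatorname{io}, \operatorname{oi}\}$, any $s' \in \{\operatorname{se}, \operatorname{nw}, \operatorname{sw}, \operatorname{ne}\}$, and any ASM $\delta$ of size $n$ by $\psi_s(\mathbf{F}^\star_{M^\delta}) := \frac{q^{s(\delta)}}{n!}$ and $\psi_{s'}(\mathbf{F}^\star_{M^\delta}) := \frac{q^{s'(\delta)}}{[n]_q!}$ are algebra morphisms.
   Context: Let $\mathbb{K}$ be a field of characteristic zero; $[n]_q := 1 + q + \dots + q^{n-1}$, $[n]_q! := [1]_q \cdots [n]_q$, $[0]_q! := 1$. An alternating sign matrix (ASM) of size $n$ is an $n\times n$ matrix with entries in $\{0,+,-\}$ (read as $0,1,-1$) such that every row and column starts and ends (ignoring zeros) with $+$ and in each row and column the $+$ and $-$ alternate. For an ASM $\delta$, $M^\delta$ is the $\{0,1\}$-matrix with $M^\delta_{ij}=1$ iff $\delta_{ij}\neq 0$. $\mathbf{ASM}$ is the Hopf algebra spanned by the $\mathbf{F}_{M^\delta}$ (a Hopf subalgebra of the Hopf algebra of $1$-packed matrices, graded by size), and $\mathbf{ASM}^\star$ is its graded dual, with $(\mathbf{F}^\star_{M^\delta})$ the adjoint basis; its product is $\mathbf{F}^\star_{M_1}\cdot\mathbf{F}^\star_{M_2} = \sum \mathbf{F}^\star_M$ over all $M$ obtained by shuffling the rows of $[M_1 \mid 0_{n_1\times n_2}]$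 with the rows of $[0_{n_2\times n_1}\mid M_2]$, $n_i$ the sizes. Via the bijection between ASMs and six-vertex configurations with domain wall boundary conditions, $\operatorname{oi}(\delta)$ is the number of $+$ entries and $\operatorname{io}(\delta)$ the number of $-$ entries of $\delta$; zero entries correspond to the four vertex types $\operatorname{ne}$ (vertical edges pointing up, horizontal edges pointing right), $\operatorname{nw}$ (up, left), $\operatorname{se}$ (down, right), $\operatorname{sw}$ (down, left). Equivalently, for a zero entry $\delta_{ij}$, with $r = \sum_{j'<j}\delta_{ij'}$ and $c = \sum_{i'<i}\delta_{i'j}$, its type is $\operatorname{ne}$ if $(r,c)=(0,0)$, $\operatorname{nw}$ if $(1,0)$, $\operatorname{se}$ if $(0,1)$, $\operatorname{sw}$ if $(1,1)$; $s'(\delta)$ counts the zero entries of type $s'$. *)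

theory Defs
  imports "HOL-Computational_Algebra.Polynomial" "HOL-Computational_Algebra.Fraction_Field"
begin

text \<open>An n x n matrix with integer entries (0, 1, -1 read as 0, +, -), indices 0..n-1,
  entries outside the n x n square being 0.\<close>
type_synonym mat = "nat \<Rightarrow> nat \<Rightarrow> int"

definition alt_line :: "int list \<Rightarrow> bool" where
  "alt_line xs \<longleftrightarrow> (let ys = filter (\<lambda>x. x \<noteq> 0) xs in
     ys \<noteq> [] \<and> hd ys = 1 \<and> last ys = 1 \<and>
     (\<forall>k. Suc k < length ys \<longrightarrow> ys ! Suc k = - (ys ! k)))"

definition is_asm :: "nat \<Rightarrow> mat \<Rightarrow> bool" where
  "is_asm n d \<longleftrightarrow> (\<forall>i j. d i j \<in> {-1, 0, 1}) \<and>
     (\<forall>i j. n \<le> i \<or> n \<le> j \<longrightarrow> d i j = 0) \<and>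
     (\<forall>i<n. alt_line (map (\<lambda>j. d i j) [0..<n])) \<and>
     (\<forall>j<n. alt_line (map (\<lambda>i. d i j) [0..<n]))"

definition ASMs :: "(nat \<times> mat) set" where
  "ASMs = {(n, d). is_asm n d}"

definition asm_oi :: "nat \<Rightarrow> mat \<Rightarrow> nat" where
  "asm_oi n d = card {(i, j). i < n \<and> j < n \<and> d i j = 1}"

definition asm_io :: "nat \<Rightarrow> mat \<Rightarrow> nat" where
  "asm_io n d = card {(i, j). i < n \<and> j < n \<and> d i j = -1}"

definition row_pre :: "mat \<Rightarrow> nat \<Rightarrow> nat \<Rightarrow> int" where
  "row_pre d i j = (\<Sum>j'<j. d i j')"

definition col_pre :: "mat \<Rightarrow> nat \<Rightarrow> nat \<Rightarrow> int" where
  "col_pre d i j = (\<Sum>i'<i. d i' j)"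

definition zero_type :: "int \<Rightarrow> int \<Rightarrow> nat \<Rightarrow> mat \<Rightarrow> nat" where
  "zero_type r c n d = card {(i, j). i < n \<and> j < n \<and> d i j = 0 \<and>
       row_pre d i j = r \<and> col_pre d i j = c}"

definition asm_ne :: "nat \<Rightarrow> mat \<Rightarrow> nat" where "asm_ne = zero_type 0 0"
definition asm_nw :: "nat \<Rightarrow> mat \<Rightarrow> nat" where "asm_nw = zero_type 1 0"
definition asm_se :: "nat \<Rightarrow> mat \<Rightarrow> nat" where "asm_se = zero_type 0 1"
definition asm_sw :: "nat \<Rightarrow> mat \<Rightarrow> nat" where "asm_sw = zero_type 1 1"

text \<open>Shuffles: the set S of row positions receiving the rows of [M1 | 0] (in order);
  the remaining positions receive the rows of [0 | M2] (in order).\<close>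
definition shuffle_sets :: "nat \<Rightarrow> nat \<Rightarrow> nat set set" where
  "shuffle_sets n1 n2 = {S. S \<subseteq> {..<n1 + n2} \<and> card S = n1}"

definition shuffle_mat :: "nat \<Rightarrow> mat \<Rightarrow> mat \<Rightarrow> nat set \<Rightarrow> mat" where
  "shuffle_mat n1 d1 d2 S = (\<lambda>i j.
     if i \<in> S then (if j < n1 then d1 (card {k\<in>S. k < i}) j else 0)
     else (if n1 \<le> j then d2 (card {k. k < i \<and> k \<notin> S}) (j - n1) else 0))"

text \<open>Elements of ASM* over K: finitely supported coefficient functions on the
  basis (F*_{M^delta}) indexed by ASMs delta.\<close>
definition supp :: "(nat \<times> mat \<Rightarrow> 'a::zero) \<Rightarrow> (nat \<times> mat) set" where
  "supp x = {D. x D \<noteq> 0}"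

definition asm_dual :: "(nat \<times> mat \<Rightarrow> 'a::zero) \<Rightarrow> bool" where
  "asm_dual x \<longleftrightarrow> finite (supp x) \<and> supp x \<subseteq> ASMs"

text \<open>Product of ASM*: bilinear extension of
  F*_{M1} . F*_{M2} = sum over all shuffles of F*_M.\<close>
definition asm_mult :: "(nat \<times> mat \<Rightarrow> 'a::field) \<Rightarrow> (nat \<times> mat \<Rightarrow> 'a) \<Rightarrow> nat \<times> mat \<Rightarrow> 'a" where
  "asm_mult x y = (\<lambda>D. \<Sum>D1\<in>supp x. \<Sum>D2\<in>supp y. x D1 * y D2 *
      of_nat (card {S \<in> shuffle_sets (fst D1) (fst D2).
         (fst D1 + fst D2, shuffle_mat (fst D1) (snd D1) (snd D2) S) = D}))"

definition asm_unit :: "nat \<times> mat \<Rightarrow> 'a::{zero,one}" where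
  "asm_unit = (\<lambda>D. if D = (0, \<lambda>_ _. 0) then 1 else 0)"

text \<open>K(q) is modelled as the fraction field of K[q].\<close>
definition constK :: "'a::field \<Rightarrow> 'a poly fract" where
  "constK c = Fract [:c:] 1"

definition qvar :: "'a::field poly fract" where
  "qvar = Fract [:0, 1:] 1"

definition q_int :: "nat \<Rightarrow> 'a::field poly fract" where
  "q_int n = (\<Sum>i<n. qvar ^ i)"

definition q_fact :: "nat \<Rightarrow> 'a::field poly fract" where
  "q_fact n = (\<Prod>k\<in>{1..n}. q_int k)"

definition lin_ext :: "(nat \<times> mat \<Rightarrow> 'a::field poly fract) \<Rightarrow> (nat \<times> mat \<Rightarrow> 'a) \<Rightarrow> 'a poly fract" where
  "lin_ext phi x = (\<Sum>D\<in>supp x. constK (x D) * phi D)"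

definition asm_alg_morphism :: "((nat \<times> mat \<Rightarrow> 'a::field) \<Rightarrow> 'a poly fract) \<Rightarrow> bool" where
  "asm_alg_morphism f \<longleftrightarrow>
     f asm_unit = 1 \<and>
     (\<forall>x y. asm_dual x \<longrightarrow> asm_dual y \<longrightarrow>
        f (\<lambda>D. x D + y D) = f x + f y \<and> f (asm_mult x y) = f x * f y) \<and>
     (\<forall>c x. asm_dual x \<longrightarrow> f (\<lambda>D. c * x D) = constK c * f x)"

end

theory Submission
  imports Defs "HOL-Computational_Algebra.Polynomial_Factorial"
begin

text \<open>
  Shuffling two ASMs \<open>\<delta>\<^sub>1, \<delta>\<^sub>2\<close> along a set \<open>S\<close> of row positions adds to each statistic of
  \<open>\<delta>\<^sub>1\<close> and \<open>\<delta>\<^sub>2\<close> a term that depends on \<open>S\<close> alone. The zeros padding a row of \<open>\<delta>\<^sub>1\<close> have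
  row prefix sum \<open>1\<close> (rows of an ASM sum to \<open>1\<close>), those padding a row of \<open>\<delta>\<^sub>2\<close> have row prefix
  sum \<open>0\<close>, and their column prefix sums are those of the other ASM after the rows already placed;
  after \<open>k\<close> rows exactly \<open>k\<close> column prefix sums of an ASM equal \<open>1\<close>. So the padding adds nothing
  to \<open>oi\<close> and \<open>io\<close>, and adds to each zero type the number of inversions of \<open>S\<close> or of its
  complement. Summing over the shuffles therefore multiplies \<open>q\<^bsup>s(\<delta>\<^sub>1)+s(\<delta>\<^sub>2)\<^esup>\<close> by the binomial
  coefficient, resp. by the \<open>q\<close>-binomial coefficient \<open>[n\<^sub>1+n\<^sub>2]\<^sub>q!/([n\<^sub>1]\<^sub>q! [n\<^sub>2]\<^sub>q!)\<close>, which is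
  exactly what the normalisations by \<open>n!\<close> and \<open>[n]\<^sub>q!\<close> absorb.
\<close>

section \<open>Linear extensions and the shuffle product\<close>

lemma constK_add: "constK (a + b) = constK a + constK b"
  unfolding constK_def by (simp add: eq_fract)

lemma constK_mult: "constK (a * b) = constK a * constK b"
  unfolding constK_def by (simp add: eq_fract)

lemma constK_0 [simp]: "constK 0 = 0"
  unfolding constK_def by (simp add: Zero_fract_def)

lemma constK_1 [simp]: "constK 1 = 1"
  unfolding constK_def by (simp add: One_fract_def one_pCons)

lemma constK_sum: "constK (sum f A) = (\<Sum>x\<in>A. constK (f x))"
  by (induction A rule: infinite_finite_induct) (auto simp: constK_add)

lemma constK_of_nat: "constK (of_nat n) = of_nat n"
  by (induction n) (auto simp: constK_add)

lemma lin_ext_superset: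
  assumes "finite A" "supp x \<subseteq> A"
  shows "lin_ext phi x = (\<Sum>D\<in>A. constK (x D) * phi D)"
  unfolding lin_ext_def
  by (rule sum.mono_neutral_left) (use assms in \<open>auto simp: supp_def\<close>)

lemma lin_ext_add:
  assumes "finite (supp x)" "finite (supp y)"
  shows "lin_ext phi (\<lambda>D. x D + y D) = lin_ext phi x + lin_ext phi y"
proof -
  let ?A = "supp x \<union> supp y"
  have "supp (\<lambda>D. x D + y D) \<subseteq> ?A" by (auto simp: supp_def)
  then have "lin_ext phi (\<lambda>D. x D + y D) = (\<Sum>D\<in>?A. constK (x D + y D) * phi D)"
    using assms by (intro lin_ext_superset) auto
  also have "\<dots> = (\<Sum>D\<in>?A. constK (x D) * phi D) + (\<Sum>D\<in>?A. constK (y D) * phi D)"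
    by (simp add: constK_add distrib_right sum.distrib)
  also have "\<dots> = lin_ext phi x + lin_ext phi y"
    using assms by (simp add: lin_ext_superset[of ?A x] lin_ext_superset[of ?A y])
  finally show ?thesis .
qed

lemma lin_ext_scale:
  assumes "finite (supp x)"
  shows "lin_ext phi (\<lambda>D. c * x D) = constK c * lin_ext phi x"
proof -
  have "supp (\<lambda>D. c * x D) \<subseteq> supp x" by (auto simp: supp_def)
  then show ?thesis
    by (subst lin_ext_superset[OF assms]) (simp_all add: lin_ext_def constK_mult sum_distrib_left mult.assoc)
qed

abbreviation asm_shuffle :: "nat \<times> mat \<Rightarrow> nat \<times> mat \<Rightarrow> nat set \<Rightarrow> nat \<times> mat" where
  "asm_shuffle D1 D2 S \<equiv> (fst D1 + fst D2, shuffle_mat (fst D1) (snd D1) (snd D2) S)"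

lemma finite_shuffle_sets: "finite (shuffle_sets n1 n2)"
  unfolding shuffle_sets_def by (rule finite_subset[of _ "Pow {..<n1+n2}"]) auto

lemma supp_asm_mult_subset:
  "supp (asm_mult x y) \<subseteq>
     (\<Union>D1\<in>supp x. \<Union>D2\<in>supp y. asm_shuffle D1 D2 ` shuffle_sets (fst D1) (fst D2))"
proof
  fix D assume "D \<in> supp (asm_mult x y)"
  then have "asm_mult x y D \<noteq> 0" by (simp add: supp_def)
  then obtain D1 where D1: "D1 \<in> supp x" and "(\<Sum>D2\<in>supp y. x D1 * y D2 *
      of_nat (card {S \<in> shuffle_sets (fst D1) (fst D2). asm_shuffle D1 D2 S = D})) \<noteq> 0"
    unfolding asm_mult_def by (meson sum.not_neutral_contains_not_neutral)
  then obtain D2 where D2: "D2 \<in> supp y"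
    and "x D1 * y D2 * of_nat (card {S \<in> shuffle_sets (fst D1) (fst D2). asm_shuffle D1 D2 S = D}) \<noteq> 0"
    by (meson sum.not_neutral_contains_not_neutral)
  then have "card {S \<in> shuffle_sets (fst D1) (fst D2). asm_shuffle D1 D2 S = D} \<noteq> 0"
    by (metis mult_zero_right of_nat_0)
  then obtain S where "S \<in> shuffle_sets (fst D1) (fst D2)" "asm_shuffle D1 D2 S = D"
    by (metis (mono_tags, lifting) card.empty empty_Collect_eq)
  with D1 D2 show "D \<in> (\<Union>D1\<in>supp x. \<Union>D2\<in>supp y. asm_shuffle D1 D2 ` shuffle_sets (fst D1) (fst D2))"
    by blast
qed

lemma lin_ext_asm_mult:
  fixes phi :: "nat \<times> mat \<Rightarrow> 'a::field poly fract"
  assumes fin: "finite (supp x)" "finite (supp y)"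
    and shuffle: "\<And>D1 D2. D1 \<in> supp x \<Longrightarrow> D2 \<in> supp y \<Longrightarrow>
        (\<Sum>S\<in>shuffle_sets (fst D1) (fst D2). phi (asm_shuffle D1 D2 S)) = phi D1 * phi D2"
  shows "lin_ext phi (asm_mult x y) = lin_ext phi x * lin_ext phi y"
proof -
  define T where "T = (\<Union>D1\<in>supp x. \<Union>D2\<in>supp y. asm_shuffle D1 D2 ` shuffle_sets (fst D1) (fst D2))"
  define multiplicity where "multiplicity D1 D2 D = card {S \<in> shuffle_sets (fst D1) (fst D2). asm_shuffle D1 D2 S = D}"
    for D1 D2 D
  have fT: "finite T" unfolding T_def using fin finite_shuffle_sets by auto
  have grouped: "(\<Sum>D\<in>T. of_nat (multiplicity D1 D2 D) * phi D) = phi D1 * phi D2"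
    if "D1 \<in> supp x" "D2 \<in> supp y" for D1 D2
  proof -
    have "asm_shuffle D1 D2 ` shuffle_sets (fst D1) (fst D2) \<subseteq> T"
      unfolding T_def using that by blast
    then have "(\<Sum>D\<in>T. \<Sum>S\<in>{S \<in> shuffle_sets (fst D1) (fst D2). asm_shuffle D1 D2 S = D}.
          phi (asm_shuffle D1 D2 S)) = (\<Sum>S\<in>shuffle_sets (fst D1) (fst D2). phi (asm_shuffle D1 D2 S))"
      by (rule sum.group[OF finite_shuffle_sets fT])
    moreover have "(\<Sum>D\<in>T. of_nat (multiplicity D1 D2 D) * phi D) = (\<Sum>D\<in>T.
        \<Sum>S\<in>{S \<in> shuffle_sets (fst D1) (fst D2). asm_shuffle D1 D2 S = D}. phi (asm_shuffle D1 D2 S))"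
      unfolding multiplicity_def by (rule sum.cong) auto
    ultimately show ?thesis using shuffle that by simp
  qed
  have "lin_ext phi (asm_mult x y) = (\<Sum>D\<in>T. constK (asm_mult x y D) * phi D)"
    using fT supp_asm_mult_subset unfolding T_def by (rule lin_ext_superset)
  also have "\<dots> = (\<Sum>D\<in>T. \<Sum>D1\<in>supp x. \<Sum>D2\<in>supp y.
      constK (x D1) * constK (y D2) * (of_nat (multiplicity D1 D2 D) * phi D))"
    unfolding asm_mult_def multiplicity_def
    by (simp add: constK_sum constK_mult constK_of_nat sum_distrib_right mult.assoc)
  also have "\<dots> = (\<Sum>D1\<in>supp x. \<Sum>D2\<in>supp y.
      constK (x D1) * constK (y D2) * (\<Sum>D\<in>T. of_nat (multiplicity D1 D2 D) * phi D))"
    by (subst sum.swap[of _ _ T], rule sum.cong[OF refl], subst sum.swap[of _ _ T])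
      (simp add: sum_distrib_left)
  also have "\<dots> = (\<Sum>D1\<in>supp x. \<Sum>D2\<in>supp y. (constK (x D1) * phi D1) * (constK (y D2) * phi D2))"
    by (intro sum.cong refl) (simp only: grouped, simp add: mult_ac)
  also have "\<dots> = lin_ext phi x * lin_ext phi y"
    unfolding lin_ext_def by (simp add: sum_product)
  finally show ?thesis .
qed

lemma asm_alg_morphism_lin_ext:
  fixes phi :: "nat \<times> mat \<Rightarrow> 'a::field poly fract"
  assumes unit: "phi (0, \<lambda>_ _. 0) = 1"
    and shuffle: "\<And>D1 D2. D1 \<in> ASMs \<Longrightarrow> D2 \<in> ASMs \<Longrightarrow>
        (\<Sum>S\<in>shuffle_sets (fst D1) (fst D2). phi (asm_shuffle D1 D2 S)) = phi D1 * phi D2"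
  shows "asm_alg_morphism (lin_ext phi)"
  unfolding asm_alg_morphism_def
proof (intro conjI allI impI)
  have "supp (asm_unit :: nat \<times> mat \<Rightarrow> 'a) = {(0, \<lambda>_ _. 0)}"
    by (auto simp: supp_def asm_unit_def)
  then show "lin_ext phi (asm_unit :: nat \<times> mat \<Rightarrow> 'a) = 1"
    by (simp add: lin_ext_def asm_unit_def unit)
next
  fix x y :: "nat \<times> mat \<Rightarrow> 'a"
  assume "asm_dual x" "asm_dual y"
  then have "finite (supp x)" "finite (supp y)" "supp x \<subseteq> ASMs" "supp y \<subseteq> ASMs"
    by (auto simp: asm_dual_def)
  then show "lin_ext phi (\<lambda>D. x D + y D) = lin_ext phi x + lin_ext phi y"
    and "lin_ext phi (asm_mult x y) = lin_ext phi x * lin_ext phi y"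
    by (auto intro!: lin_ext_add lin_ext_asm_mult shuffle)
next
  fix c :: 'a and x :: "nat \<times> mat \<Rightarrow> 'a"
  assume "asm_dual x"
  then show "lin_ext phi (\<lambda>D. c * x D) = constK c * lin_ext phi x"
    by (simp add: asm_dual_def lin_ext_scale)
qed

section \<open>Alternating sign matrices\<close>

lemma sum_list_filter_nonzero: "sum_list (filter (\<lambda>x::int. x \<noteq> 0) xs) = sum_list xs"
  by (induction xs) auto

lemma alternating_nth:
  assumes "\<forall>k. Suc k < length ys \<longrightarrow> ys ! Suc k = - (ys ! k)" "ys \<noteq> []" "hd ys = (1::int)"
    and "k < length ys"
  shows "ys ! k = (-1) ^ k"
  using assms(4)
proof (induction k)
  case 0 then show ?case using assms(2,3) by (simp add: hd_conv_nth)
next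
  case (Suc k) then show ?case using assms(1) by auto
qed

lemma sum_list_take_alternating:
  assumes "\<forall>k. Suc k < length ys \<longrightarrow> ys ! Suc k = - (ys ! k)" "ys \<noteq> []" "hd ys = (1::int)"
  shows "sum_list (take m ys) = (if even (min m (length ys)) then 0 else 1)"
proof -
  have alternating_sum: "(\<Sum>k<N. (-1::int) ^ k) = (if even N then 0 else 1)" for N
    by (induction N) auto
  have "sum_list (take m ys) = (\<Sum>k<min m (length ys). ys ! k)"
    by (simp add: sum_list_sum_nth min.commute atLeast0LessThan)
  also have "\<dots> = (\<Sum>k<min m (length ys). (-1) ^ k)"
    using alternating_nth[OF assms] by simp
  finally show ?thesis by (simp only: alternating_sum)
qed

lemma alt_line_sums:
  assumes "alt_line xs"
  shows alt_line_prefix_sum: "sum_list (take m xs) \<in> {0, 1}"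
    and alt_line_sum: "sum_list xs = 1"
proof -
  define ys where "ys = filter (\<lambda>x. x \<noteq> 0) xs"
  have alt: "\<forall>k. Suc k < length ys \<longrightarrow> ys ! Suc k = - (ys ! k)" "ys \<noteq> []" "hd ys = 1"
    and last: "last ys = 1"
    using assms unfolding alt_line_def ys_def Let_def by auto
  have "ys = filter (\<lambda>x. x \<noteq> 0) (take m xs) @ filter (\<lambda>x. x \<noteq> 0) (drop m xs)"
    unfolding ys_def by (metis append_take_drop_id filter_append)
  then have "filter (\<lambda>x. x \<noteq> 0) (take m xs) = take (length (filter (\<lambda>x. x \<noteq> 0) (take m xs))) ys"
    by (metis append_eq_conv_conj)
  then have "sum_list (take m xs) = sum_list (take (length (filter (\<lambda>x. x \<noteq> 0) (take m xs))) ys)"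
    by (metis sum_list_filter_nonzero)
  then show "sum_list (take m xs) \<in> {0, 1}"
    using sum_list_take_alternating[OF alt] by simp
  have "(-1) ^ (length ys - 1) = (1::int)"
    using last alternating_nth[OF alt, of "length ys - 1"] alt(2) by (simp add: last_conv_nth)
  then have "odd (length ys)"
    using alt(2) by (simp add: minus_one_power_iff split: if_splits)
  then have "sum_list ys = 1"
    using sum_list_take_alternating[OF alt, of "length ys"] by simp
  then show "sum_list xs = 1"
    unfolding ys_def by (simp add: sum_list_filter_nonzero)
qed

lemma asm_row_sum:
  assumes "is_asm n d" "i < n"
  shows "(\<Sum>j<n. d i j) = 1"
proof -
  have "alt_line (map (\<lambda>j. d i j) [0..<n])" using assms unfolding is_asm_def by auto
  from alt_line_sum[OF this] show ?thesis
    by (simp add: sum_list_sum_nth atLeast0LessThan)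
qed

lemma asm_col_pre_01:
  assumes "is_asm n d" "j < n" "k \<le> n"
  shows "col_pre d k j \<in> {0, 1}"
proof -
  have "alt_line (map (\<lambda>i. d i j) [0..<n])" using assms unfolding is_asm_def by auto
  from alt_line_prefix_sum[OF this, of k] have "sum_list (map (\<lambda>i. d i j) [0..<k]) \<in> {0, 1}"
    using assms(3) by (simp add: take_map)
  then show ?thesis unfolding col_pre_def
    by (simp add: sum_list_sum_nth atLeast0LessThan)
qed

lemma asm_sum_col_pre:
  assumes "is_asm n d" "k \<le> n"
  shows "(\<Sum>j<n. col_pre d k j) = int k"
proof -
  have "(\<Sum>j<n. col_pre d k j) = (\<Sum>i<k. \<Sum>j<n. d i j)"
    unfolding col_pre_def by (rule sum.swap)
  also have "\<dots> = (\<Sum>i<k. 1)" using asm_row_sum[OF assms(1)] assms(2) by simp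
  finally show ?thesis by simp
qed

lemma asm_count_col_pre:
  assumes "is_asm n d" "k \<le> n"
  shows asm_count_col_pre_1: "(\<Sum>j<n. if col_pre d k j = 1 then 1 else 0) = k"
    and asm_count_col_pre_0: "(\<Sum>j<n. if col_pre d k j = 0 then 1 else 0) = n - k"
proof -
  have "int (\<Sum>j<n. if col_pre d k j = 1 then 1 else 0) = (\<Sum>j<n. col_pre d k j)"
    unfolding of_nat_sum
    by (rule sum.cong) (use asm_col_pre_01[OF assms(1) _ assms(2)] in auto)
  then show ones: "(\<Sum>j<n. if col_pre d k j = 1 then 1 else 0) = k"
    using asm_sum_col_pre[OF assms] by (metis of_nat_eq_iff)
  have "(\<Sum>j<n. if col_pre d k j = 0 then 1 else 0) + (\<Sum>j<n. if col_pre d k j = 1 then 1 else 0)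
     = (\<Sum>j<n. 1::nat)"
    unfolding sum.distrib[symmetric]
    by (rule sum.cong) (use asm_col_pre_01[OF assms(1) _ assms(2)] in auto)
  then show "(\<Sum>j<n. if col_pre d k j = 0 then 1 else 0) = n - k" using ones by simp
qed

section \<open>Shuffles of matrices\<close>

definition rank_in :: "nat set \<Rightarrow> nat \<Rightarrow> nat" where
  "rank_in S i = card {k\<in>S. k < i}"

definition rank_out :: "nat set \<Rightarrow> nat \<Rightarrow> nat" where
  "rank_out S i = card {k. k < i \<and> k \<notin> S}"

lemma rank_in_0 [simp]: "rank_in S 0 = 0"
  by (simp add: rank_in_def)

lemma rank_out_0 [simp]: "rank_out S 0 = 0"
  by (simp add: rank_out_def)

lemma rank_in_Suc: "rank_in S (Suc i) = rank_in S i + (if i \<in> S then 1 else 0)"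
proof -
  have "{k\<in>S. k < Suc i} = (if i \<in> S then insert i {k\<in>S. k < i} else {k\<in>S. k < i})"
    by (auto simp: less_Suc_eq)
  then show ?thesis unfolding rank_in_def by (simp add: card_insert_if)
qed

lemma rank_out_Suc: "rank_out S (Suc i) = rank_out S i + (if i \<in> S then 0 else 1)"
proof -
  have "{k. k < Suc i \<and> k \<notin> S} =
      (if i \<in> S then {k. k < i \<and> k \<notin> S} else insert i {k. k < i \<and> k \<notin> S})"
    by (auto simp: less_Suc_eq)
  then show ?thesis unfolding rank_out_def by (simp add: card_insert_if)
qed

lemma rank_in_add_rank_out: "rank_in S i + rank_out S i = i"
  by (induction i) (auto simp: rank_in_Suc rank_out_Suc)

lemma rank_in_mono: "i \<le> j \<Longrightarrow> rank_in S i \<le> rank_in S j"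
  unfolding rank_in_def by (rule card_mono) auto

lemma rank_out_mono: "i \<le> j \<Longrightarrow> rank_out S i \<le> rank_out S j"
  unfolding rank_out_def by (rule card_mono) auto

lemma rank_in_full: "S \<subseteq> {..<m} \<Longrightarrow> rank_in S m = card S"
  unfolding rank_in_def by (rule arg_cong[where f=card]) auto

lemma rank_out_full: "S \<subseteq> {..<m} \<Longrightarrow> rank_out S m = m - card S"
  using rank_in_add_rank_out[of S m] rank_in_full[of S m] by simp

lemma rank_in_less_card:
  assumes "S \<subseteq> {..<m}" "i \<in> S"
  shows "rank_in S i < card S"
proof -
  have "rank_in S (Suc i) \<le> rank_in S m" using assms by (intro rank_in_mono) auto
  then show ?thesis using assms rank_in_full[of S m] by (simp add: rank_in_Suc)
qed

lemma rank_in_compl: "i \<le> m \<Longrightarrow> rank_in ({..<m} - S) i = rank_out S i"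
  unfolding rank_in_def rank_out_def by (rule arg_cong[where f=card]) auto

lemma rank_out_compl: "i \<le> m \<Longrightarrow> rank_out ({..<m} - S) i = rank_in S i"
  unfolding rank_in_def rank_out_def by (rule arg_cong[where f=card]) auto

lemma shuffle_mat_ranks:
  "shuffle_mat n1 d1 d2 S i j =
     (if i \<in> S then (if j < n1 then d1 (rank_in S i) j else 0)
      else (if n1 \<le> j then d2 (rank_out S i) (j - n1) else 0))"
  unfolding shuffle_mat_def rank_in_def rank_out_def by simp

lemma col_pre_Suc: "col_pre d (Suc i) j = col_pre d i j + d i j"
  unfolding col_pre_def by simp

lemma row_pre_Suc: "row_pre d i (Suc j) = row_pre d i j + d i j"
  unfolding row_pre_def by simp

lemma col_pre_shuffle_left:
  "j < n1 \<Longrightarrow> col_pre (shuffle_mat n1 d1 d2 S) i j = col_pre d1 (rank_in S i) j"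
  by (induction i) (simp_all add: col_pre_def col_pre_Suc rank_in_Suc shuffle_mat_ranks)

lemma col_pre_shuffle_right:
  "col_pre (shuffle_mat n1 d1 d2 S) i (n1 + j) = col_pre d2 (rank_out S i) j"
  by (induction i) (simp_all add: col_pre_def col_pre_Suc rank_out_Suc shuffle_mat_ranks)

lemma row_pre_shuffle_left:
  "j \<le> n1 \<Longrightarrow> row_pre (shuffle_mat n1 d1 d2 S) i j =
     (if i \<in> S then row_pre d1 (rank_in S i) j else 0)"
  by (induction j) (simp_all add: row_pre_def row_pre_Suc shuffle_mat_ranks)

lemma row_pre_shuffle_right:
  "row_pre (shuffle_mat n1 d1 d2 S) i (n1 + j) =
     (if i \<in> S then row_pre d1 (rank_in S i) n1 else row_pre d2 (rank_out S i) j)"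
proof (induction j)
  case 0 then show ?case using row_pre_shuffle_left[of n1 n1] by (simp add: row_pre_def)
next
  case (Suc j) then show ?case by (simp add: row_pre_Suc shuffle_mat_ranks)
qed

section \<open>Statistics of shuffles\<close>

definition row_count :: "(int \<Rightarrow> int \<Rightarrow> int \<Rightarrow> bool) \<Rightarrow> nat \<Rightarrow> mat \<Rightarrow> nat \<Rightarrow> nat" where
  "row_count P n d i = (\<Sum>j<n. if P (d i j) (row_pre d i j) (col_pre d i j) then 1 else 0)"

definition entry_count :: "(int \<Rightarrow> int \<Rightarrow> int \<Rightarrow> bool) \<Rightarrow> nat \<Rightarrow> mat \<Rightarrow> nat" where
  "entry_count P n d = (\<Sum>i<n. row_count P n d i)"

lemma card_pairs_lessThan:
  "card {(i, j). i < (n::nat) \<and> j < n \<and> Q i j} = (\<Sum>i<n. \<Sum>j<n. if Q i j then 1 else 0)"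
proof -
  have "{(i, j). i < n \<and> j < n \<and> Q i j} = (SIGMA i:{..<n}. {j\<in>{..<n}. Q i j})" by auto
  then show ?thesis by (simp add: card_SigmaI sum.If_cases Int_def)
qed

lemma asm_stats_entry_count:
  "asm_oi n d = entry_count (\<lambda>v r c. v = 1) n d"
  "asm_io n d = entry_count (\<lambda>v r c. v = -1) n d"
  "zero_type r0 c0 n d = entry_count (\<lambda>v r c. v = 0 \<and> r = r0 \<and> c = c0) n d"
  unfolding asm_oi_def asm_io_def zero_type_def entry_count_def row_count_def card_pairs_lessThan
  by simp_all

lemma sum_lessThan_add: "(\<Sum>j<(n1::nat) + n2. f j) = (\<Sum>j<n1. f j) + (\<Sum>j<n2. f (n1 + j))"
  by (induction n2) (auto simp: add.assoc)

text \<open>In row \<open>i\<close> of a shuffle, the zeros padding the row of \<open>d1\<close> (resp. \<open>d2\<close>) have row prefix sum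
  \<open>1\<close> (the full row sum of \<open>d1\<close>) resp. \<open>0\<close>, and column prefix sums those of the other matrix.\<close>

lemma row_count_shuffle:
  assumes S: "S \<in> shuffle_sets n1 n2" and d1: "is_asm n1 d1" and i: "i < n1 + n2"
  shows "row_count P (n1 + n2) (shuffle_mat n1 d1 d2 S) i =
    (if i \<in> S then row_count P n1 d1 (rank_in S i) +
                    (\<Sum>j<n2. if P 0 1 (col_pre d2 (rank_out S i) j) then 1 else 0)
     else (\<Sum>j<n1. if P 0 0 (col_pre d1 (rank_in S i) j) then 1 else 0) +
          row_count P n2 d2 (rank_out S i))"
proof -
  let ?M = "shuffle_mat n1 d1 d2 S"
  let ?g = "\<lambda>j. if P (?M i j) (row_pre ?M i j) (col_pre ?M i j) then 1 else (0::nat)"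
  have split: "row_count P (n1 + n2) ?M i = (\<Sum>j<n1. ?g j) + (\<Sum>j<n2. ?g (n1 + j))"
    unfolding row_count_def sum_lessThan_add ..
  show ?thesis
  proof (cases "i \<in> S")
    case True
    have "rank_in S i < n1" using rank_in_less_card[of S "n1 + n2" i] S True
      by (simp add: shuffle_sets_def)
    then have "row_pre d1 (rank_in S i) n1 = 1"
      using asm_row_sum[OF d1] by (simp add: row_pre_def)
    moreover have "(\<Sum>j<n1. ?g j) = row_count P n1 d1 (rank_in S i)"
      unfolding row_count_def using True
      by (intro sum.cong) (auto simp: shuffle_mat_ranks row_pre_shuffle_left col_pre_shuffle_left)
    ultimately show ?thesis using True unfolding split
      by (simp add: shuffle_mat_ranks row_pre_shuffle_right col_pre_shuffle_right)
  next
    case False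
    have "(\<Sum>j<n2. ?g (n1 + j)) = row_count P n2 d2 (rank_out S i)"
      unfolding row_count_def using False
      by (intro sum.cong) (auto simp: shuffle_mat_ranks row_pre_shuffle_right col_pre_shuffle_right)
    then show ?thesis using False unfolding split
      by (simp add: shuffle_mat_ranks row_pre_shuffle_left col_pre_shuffle_left)
  qed
qed

lemma sum_over_ranks:
  fixes f g h e :: "nat \<Rightarrow> nat"
  shows "(\<Sum>i<m. if i \<in> S then f (rank_in S i) + g (rank_out S i)
                 else h (rank_in S i) + e (rank_out S i))
   = (\<Sum>k<rank_in S m. f k) + (\<Sum>k<rank_out S m. e k) +
     (\<Sum>i<m. if i \<in> S then g (rank_out S i) else h (rank_in S i))"
  by (induction m) (auto simp: rank_in_Suc rank_out_Suc)

lemma entry_count_shuffle: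
  assumes S: "S \<in> shuffle_sets n1 n2" and d1: "is_asm n1 d1"
  shows "entry_count P (n1 + n2) (shuffle_mat n1 d1 d2 S) = entry_count P n1 d1 + entry_count P n2 d2 +
     (\<Sum>i<n1 + n2. if i \<in> S then (\<Sum>j<n2. if P 0 1 (col_pre d2 (rank_out S i) j) then 1 else 0)
                   else (\<Sum>j<n1. if P 0 0 (col_pre d1 (rank_in S i) j) then 1 else 0))"
proof -
  have S': "S \<subseteq> {..<n1 + n2}" "card S = n1" using S by (auto simp: shuffle_sets_def)
  define X1 where "X1 k = (\<Sum>j<n1. if P 0 0 (col_pre d1 k j) then 1 else (0::nat))" for k
  define X2 where "X2 k = (\<Sum>j<n2. if P 0 1 (col_pre d2 k j) then 1 else (0::nat))" for k
  have "entry_count P (n1 + n2) (shuffle_mat n1 d1 d2 S) =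
    (\<Sum>i<n1 + n2. if i \<in> S then row_count P n1 d1 (rank_in S i) + X2 (rank_out S i)
                  else X1 (rank_in S i) + row_count P n2 d2 (rank_out S i))"
    unfolding entry_count_def X1_def X2_def by (rule sum.cong) (simp_all add: row_count_shuffle[OF S d1])
  also have "\<dots> = entry_count P n1 d1 + entry_count P n2 d2 +
      (\<Sum>i<n1 + n2. if i \<in> S then X2 (rank_out S i) else X1 (rank_in S i))"
    unfolding sum_over_ranks entry_count_def
    using rank_in_full[OF S'(1)] rank_out_full[OF S'(1)] S'(2) by simp
  finally show ?thesis unfolding X1_def X2_def .
qed

text \<open>\<open>inversions S m\<close> counts the pairs \<open>k < i < m\<close> with \<open>k \<in> S\<close> and \<open>i \<notin> S\<close>.\<close>

definition inversions :: "nat set \<Rightarrow> nat \<Rightarrow> nat" where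
  "inversions S m = (\<Sum>i<m. if i \<in> S then 0 else rank_in S i)"

lemma sum_rank_out_eq_inversions_compl:
  "(\<Sum>i<m. if i \<in> S then rank_out S i else 0) = inversions ({..<m} - S) m"
  unfolding inversions_def by (rule sum.cong) (auto simp: rank_in_compl)

lemma sum_remaining_rank_in:
  "(\<Sum>i<m. if i \<in> S then 0 else rank_in S m - rank_in S i) = (\<Sum>i<m. if i \<in> S then rank_out S i else 0)"
proof (induction m)
  case (Suc m)
  have "(\<Sum>i<m. if i \<in> S then 0 else rank_in S (Suc m) - rank_in S i) =
      (\<Sum>i<m. if i \<in> S then 0 else rank_in S m - rank_in S i) +
      (if m \<in> S then (\<Sum>i<m. if i \<in> S then 0 else 1) else 0)"
    by (auto simp: rank_in_Suc Suc_diff_le rank_in_mono sum.distrib[symmetric] intro!: sum.cong)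
  moreover have "(\<Sum>i<m. if i \<in> S then 0 else 1) = rank_out S m"
    by (induction m) (auto simp: rank_out_Suc)
  ultimately show ?case using Suc.IH by (simp add: rank_in_Suc)
qed simp

lemma sum_remaining_rank_out:
  "(\<Sum>i<m. if i \<in> S then rank_out S m - rank_out S i else 0) = inversions S m"
proof -
  let ?T = "{..<m} - S"
  have "(\<Sum>i<m. if i \<in> S then rank_out S m - rank_out S i else 0) =
      (\<Sum>i<m. if i \<in> ?T then 0 else rank_in ?T m - rank_in ?T i)"
    by (rule sum.cong) (auto simp: rank_in_compl)
  also have "\<dots> = (\<Sum>i<m. if i \<in> ?T then rank_out ?T i else 0)"
    by (rule sum_remaining_rank_in)
  also have "\<dots> = inversions S m"
    unfolding inversions_def by (rule sum.cong) (auto simp: rank_out_compl)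
  finally show ?thesis .
qed

lemma shuffle_sets_ranks_le:
  assumes "S \<in> shuffle_sets n1 n2" "i < n1 + n2"
  shows "rank_in S i \<le> n1" "rank_out S i \<le> n2"
  using assms rank_in_mono[of i "n1 + n2" S] rank_out_mono[of i "n1 + n2" S]
    rank_in_full[of S "n1 + n2"] rank_out_full[of S "n1 + n2"]
  by (auto simp: shuffle_sets_def)

lemma asm_oi_shuffle:
  "is_asm n1 d1 \<Longrightarrow> S \<in> shuffle_sets n1 n2 \<Longrightarrow>
     asm_oi (n1 + n2) (shuffle_mat n1 d1 d2 S) = asm_oi n1 d1 + asm_oi n2 d2"
  unfolding asm_stats_entry_count by (simp add: entry_count_shuffle)

lemma asm_io_shuffle:
  "is_asm n1 d1 \<Longrightarrow> S \<in> shuffle_sets n1 n2 \<Longrightarrow>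
     asm_io (n1 + n2) (shuffle_mat n1 d1 d2 S) = asm_io n1 d1 + asm_io n2 d2"
  unfolding asm_stats_entry_count by (simp add: entry_count_shuffle)

lemma asm_se_shuffle:
  assumes d1: "is_asm n1 d1" and S: "S \<in> shuffle_sets n1 n2"
  shows "asm_se (n1 + n2) (shuffle_mat n1 d1 d2 S) =
    asm_se n1 d1 + asm_se n2 d2 + inversions S (n1 + n2)"
proof -
  have "(\<Sum>i<n1 + n2. if i \<in> S then 0 else \<Sum>j<n1. if col_pre d1 (rank_in S i) j = 1 then 1 else 0)
    = inversions S (n1 + n2)"
    unfolding inversions_def
    by (rule sum.cong) (auto simp: asm_count_col_pre_1[OF d1] shuffle_sets_ranks_le[OF S])
  then show ?thesis
    unfolding asm_se_def asm_stats_entry_count entry_count_shuffle[OF S d1] by (simp cong: if_cong)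
qed

lemma asm_nw_shuffle:
  assumes d1: "is_asm n1 d1" and d2: "is_asm n2 d2" and S: "S \<in> shuffle_sets n1 n2"
  shows "asm_nw (n1 + n2) (shuffle_mat n1 d1 d2 S) =
    asm_nw n1 d1 + asm_nw n2 d2 + inversions S (n1 + n2)"
proof -
  have "rank_out S (n1 + n2) = n2" using S by (simp add: rank_out_full shuffle_sets_def)
  then have "(\<Sum>i<n1 + n2. if i \<in> S then \<Sum>j<n2. if col_pre d2 (rank_out S i) j = 0 then 1 else 0 else 0)
    = (\<Sum>i<n1 + n2. if i \<in> S then rank_out S (n1 + n2) - rank_out S i else 0)"
    by (intro sum.cong) (auto simp: asm_count_col_pre_0[OF d2] shuffle_sets_ranks_le[OF S])
  then show ?thesis
    unfolding asm_nw_def asm_stats_entry_count entry_count_shuffle[OF S d1] sum_remaining_rank_out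
    by (simp cong: if_cong)
qed

lemma asm_ne_shuffle:
  assumes d1: "is_asm n1 d1" and S: "S \<in> shuffle_sets n1 n2"
  shows "asm_ne (n1 + n2) (shuffle_mat n1 d1 d2 S) =
    asm_ne n1 d1 + asm_ne n2 d2 + inversions ({..<n1 + n2} - S) (n1 + n2)"
proof -
  have "rank_in S (n1 + n2) = n1" using S by (simp add: rank_in_full shuffle_sets_def)
  then have "(\<Sum>i<n1 + n2. if i \<in> S then 0 else \<Sum>j<n1. if col_pre d1 (rank_in S i) j = 0 then 1 else 0)
    = (\<Sum>i<n1 + n2. if i \<in> S then 0 else rank_in S (n1 + n2) - rank_in S i)"
    by (intro sum.cong) (auto simp: asm_count_col_pre_0[OF d1] shuffle_sets_ranks_le[OF S])
  then show ?thesis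
    unfolding asm_ne_def asm_stats_entry_count entry_count_shuffle[OF S d1] sum_remaining_rank_in
      sum_rank_out_eq_inversions_compl
    by (simp cong: if_cong)
qed

lemma asm_sw_shuffle:
  assumes d1: "is_asm n1 d1" and d2: "is_asm n2 d2" and S: "S \<in> shuffle_sets n1 n2"
  shows "asm_sw (n1 + n2) (shuffle_mat n1 d1 d2 S) =
    asm_sw n1 d1 + asm_sw n2 d2 + inversions ({..<n1 + n2} - S) (n1 + n2)"
proof -
  have "(\<Sum>i<n1 + n2. if i \<in> S then \<Sum>j<n2. if col_pre d2 (rank_out S i) j = 1 then 1 else 0 else 0)
    = (\<Sum>i<n1 + n2. if i \<in> S then rank_out S i else 0)"
    by (rule sum.cong) (auto simp: asm_count_col_pre_1[OF d2] shuffle_sets_ranks_le[OF S])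
  then show ?thesis
    unfolding asm_sw_def asm_stats_entry_count entry_count_shuffle[OF S d1]
      sum_rank_out_eq_inversions_compl
    by (simp cong: if_cong)
qed

section \<open>Inversions and the \<open>q\<close>-binomial theorem\<close>

lemma shuffle_sets_0_left: "shuffle_sets 0 n = {{}}"
  unfolding shuffle_sets_def by (auto dest: finite_subset)

lemma shuffle_sets_0_right: "shuffle_sets n 0 = {{..<n}}"
  unfolding shuffle_sets_def using card_subset_eq[of "{..<n}"] by auto

lemma shuffle_sets_Suc_Suc:
  "shuffle_sets (Suc k) (Suc l) =
     insert (k + Suc l) ` shuffle_sets k (Suc l) \<union> shuffle_sets (Suc k) l" (is "?L = ?R")
proof
  show "?L \<subseteq> ?R"
  proof
    fix S assume S: "S \<in> ?L"
    then have sub: "S \<subseteq> {..<Suc (k + Suc l)}" and card: "card S = Suc k"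
      by (auto simp: shuffle_sets_def)
    show "S \<in> ?R"
    proof (cases "k + Suc l \<in> S")
      case True
      then have "S - {k + Suc l} \<in> shuffle_sets k (Suc l)" and "S = insert (k + Suc l) (S - {k + Suc l})"
        using sub card finite_subset[OF sub] by (auto simp: shuffle_sets_def less_Suc_eq)
      then show ?thesis by blast
    next
      case False
      then have "S \<in> shuffle_sets (Suc k) l"
        using sub card by (auto simp: shuffle_sets_def less_Suc_eq)
      then show ?thesis by blast
    qed
  qed
next
  show "?R \<subseteq> ?L"
  proof
    fix S assume "S \<in> ?R"
    then show "S \<in> ?L"
    proof
      assume "S \<in> insert (k + Suc l) ` shuffle_sets k (Suc l)"
      then obtain T where T: "T \<in> shuffle_sets k (Suc l)" "S = insert (k + Suc l) T" by blast
      then have "finite T" "k + Suc l \<notin> T" by (auto simp: shuffle_sets_def dest: finite_subset)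
      with T show ?thesis by (auto simp: shuffle_sets_def)
    qed (auto simp: shuffle_sets_def)
  qed
qed

lemma sum_shuffle_sets_Suc_Suc:
  "(\<Sum>S\<in>shuffle_sets (Suc k) (Suc l). F S) =
     (\<Sum>S\<in>shuffle_sets k (Suc l). F (insert (k + Suc l) S)) + (\<Sum>S\<in>shuffle_sets (Suc k) l. F S)"
proof -
  have "inj_on (insert (k + Suc l)) (shuffle_sets k (Suc l))"
  proof (rule inj_onI)
    fix S T assume "S \<in> shuffle_sets k (Suc l)" "T \<in> shuffle_sets k (Suc l)"
      and "insert (k + Suc l) S = insert (k + Suc l) T"
    moreover have "k + Suc l \<notin> S" "k + Suc l \<notin> T"
      using calculation by (auto simp: shuffle_sets_def)
    ultimately show "S = T" by (metis Diff_insert_absorb)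
  qed
  moreover have "insert (k + Suc l) ` shuffle_sets k (Suc l) \<inter> shuffle_sets (Suc k) l = {}"
    by (auto simp: shuffle_sets_def)
  ultimately show ?thesis
    unfolding shuffle_sets_Suc_Suc
    by (simp add: sum.union_disjoint finite_shuffle_sets sum.reindex)
qed

lemma inversions_insert_top: "inversions (insert m S) (Suc m) = inversions S m"
proof -
  have "rank_in (insert m S) i = rank_in S i" if "i \<le> m" for i
    unfolding rank_in_def using that by (intro arg_cong[where f=card]) auto
  then show ?thesis unfolding inversions_def by (auto intro!: sum.cong)
qed

lemma inversions_Suc: "m \<notin> S \<Longrightarrow> inversions S (Suc m) = inversions S m + rank_in S m"
  unfolding inversions_def by simp

definition shuffle_inversion_gf :: "nat \<Rightarrow> nat \<Rightarrow> 'a::field poly fract" where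
  "shuffle_inversion_gf n1 n2 = (\<Sum>S\<in>shuffle_sets n1 n2. qvar ^ inversions S (n1 + n2))"

lemma shuffle_inversion_gf_Suc_Suc:
  "shuffle_inversion_gf (Suc k) (Suc l) =
     shuffle_inversion_gf k (Suc l) + qvar ^ Suc k * shuffle_inversion_gf (Suc k) l"
proof -
  have top_in: "(\<Sum>S\<in>shuffle_sets k (Suc l). qvar ^ inversions (insert (k + Suc l) S) (Suc k + Suc l))
      = shuffle_inversion_gf k (Suc l)"
    unfolding shuffle_inversion_gf_def by (simp add: inversions_insert_top)
  have top_out: "(\<Sum>S\<in>shuffle_sets (Suc k) l. qvar ^ inversions S (Suc k + Suc l))
      = qvar ^ Suc k * shuffle_inversion_gf (Suc k) l"
    unfolding shuffle_inversion_gf_def sum_distrib_left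
  proof (rule sum.cong[OF refl])
    fix S assume "S \<in> shuffle_sets (Suc k) l"
    then have "k + Suc l \<notin> S" "rank_in S (k + Suc l) = Suc k"
      by (auto simp: shuffle_sets_def rank_in_full)
    then show "qvar ^ inversions S (Suc k + Suc l) = qvar ^ Suc k * qvar ^ inversions S (Suc k + l)"
      using inversions_Suc[of "k + Suc l" S] by (simp add: power_add mult.commute)
  qed
  show ?thesis
    unfolding shuffle_inversion_gf_def[of "Suc k"] sum_shuffle_sets_Suc_Suc top_in top_out ..
qed

lemma q_int_add: "q_int (a + b) = q_int a + qvar ^ a * q_int b"
  unfolding q_int_def by (simp add: sum_lessThan_add power_add sum_distrib_left)

lemma q_fact_Suc: "q_fact (Suc n) = q_fact n * q_int (Suc n)"
  unfolding q_fact_def by (simp add: atLeastAtMostSuc_conv mult.commute)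

lemma q_fact_0 [simp]: "q_fact 0 = 1"
  unfolding q_fact_def by simp

lemma shuffle_inversion_gf_q_binomial:
  "shuffle_inversion_gf n1 n2 * q_fact n1 * q_fact n2 = (q_fact (n1 + n2) :: 'a::field poly fract)"
proof (induction n1 arbitrary: n2)
  case 0
  show ?case by (simp add: shuffle_inversion_gf_def shuffle_sets_0_left inversions_def rank_in_def)
next
  case (Suc k)
  note IH_k = Suc.IH
  show ?case
  proof (induction n2)
    case 0
    show ?case by (simp add: shuffle_inversion_gf_def shuffle_sets_0_right inversions_def)
  next
    case (Suc l)
    have "(shuffle_inversion_gf (Suc k) (Suc l) :: 'a poly fract) * q_fact (Suc k) * q_fact (Suc l)
        = (shuffle_inversion_gf k (Suc l) * q_fact k * q_fact (Suc l)) * q_int (Suc k) +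
          qvar ^ Suc k * (shuffle_inversion_gf (Suc k) l * q_fact (Suc k) * q_fact l) * q_int (Suc l)"
      unfolding shuffle_inversion_gf_Suc_Suc q_fact_Suc[of k] q_fact_Suc[of l]
      by (simp add: algebra_simps)
    also have "\<dots> = q_fact (k + Suc l) * q_int (Suc k) + qvar ^ Suc k * q_fact (Suc k + l) * q_int (Suc l)"
      by (simp only: IH_k Suc.IH)
    also have "\<dots> = q_fact (k + Suc l) * (q_int (Suc k) + qvar ^ Suc k * q_int (Suc l))"
      by (simp add: algebra_simps)
    also have "\<dots> = q_fact (Suc k + Suc l)"
      unfolding q_int_add[symmetric] by (simp add: q_fact_Suc)
    finally show ?case .
  qed
qed

lemma bij_betw_compl_shuffle_sets:
  "bij_betw (\<lambda>S. {..<n1 + n2} - S) (shuffle_sets n1 n2) (shuffle_sets n2 n1)"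
proof (rule bij_betw_byWitness[where f' = "\<lambda>S. {..<n1 + n2} - S"])
  have "card ({..<n1 + n2} - S) = n1 + n2 - card S" if "S \<subseteq> {..<n1 + n2}" for S
    using that by (simp add: card_Diff_subset finite_subset)
  then show "(\<lambda>S. {..<n1 + n2} - S) ` shuffle_sets n1 n2 \<subseteq> shuffle_sets n2 n1"
    "(\<lambda>S. {..<n1 + n2} - S) ` shuffle_sets n2 n1 \<subseteq> shuffle_sets n1 n2"
    by (auto simp: shuffle_sets_def add.commute)
qed (auto simp: shuffle_sets_def)

lemma shuffle_inversion_gf_compl_q_binomial:
  "(\<Sum>S\<in>shuffle_sets n1 n2. qvar ^ inversions ({..<n1 + n2} - S) (n1 + n2)) * q_fact n1 * q_fact n2
     = (q_fact (n1 + n2) :: 'a::field poly fract)"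
proof -
  have "(\<Sum>S\<in>shuffle_sets n1 n2. qvar ^ inversions ({..<n1 + n2} - S) (n1 + n2)) =
      (shuffle_inversion_gf n2 n1 :: 'a poly fract)"
    unfolding shuffle_inversion_gf_def
    using sum.reindex_bij_betw[OF bij_betw_compl_shuffle_sets, of "\<lambda>S. qvar ^ inversions S (n1 + n2)"]
    by (simp add: add.commute)
  then show ?thesis
    using shuffle_inversion_gf_q_binomial[of n2 n1] by (simp add: add.commute mult_ac)
qed

lemma card_shuffle_sets_fact:
  "of_nat (card (shuffle_sets n1 n2)) * of_nat (fact n1) * of_nat (fact n2) =
     (of_nat (fact (n1 + n2)) :: 'a::semiring_1)"
proof -
  have "card (shuffle_sets n1 n2) = (n1 + n2) choose n1"
    unfolding shuffle_sets_def using n_subsets[of "{..<n1 + n2}" n1] by simp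
  then show ?thesis
    using binomial_fact_lemma[of n1 "n1 + n2"] by (simp flip: of_nat_mult add: mult_ac)
qed

lemma of_nat_fact_fract_nonzero: "(of_nat (fact n) :: 'a::field_char_0 poly fract) \<noteq> 0"
  by (simp add: of_nat_fract Zero_fract_def eq_fract)

lemma q_int_nonzero:
  assumes "k \<ge> 1"
  shows "q_int k \<noteq> (0 :: 'a::field poly fract)"
proof -
  have to_fract_power: "to_fract (p ^ n) = to_fract p ^ n" for p :: "'a poly" and n
    by (induction n) simp_all
  have "qvar = to_fract [:0, 1::'a:]"
    by (simp add: qvar_def to_fract_def)
  then have "q_int k = to_fract (\<Sum>i<k. [:0, 1::'a:] ^ i)"
    unfolding q_int_def by (simp add: to_fract_power)
  moreover have "poly (\<Sum>i<k. [:0, 1::'a:] ^ i) 0 = 1"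
    using assms by (simp add: poly_sum power_0_left sum.delta)
  then have "(\<Sum>i<k. [:0, 1::'a:] ^ i) \<noteq> 0"
    by (metis poly_0 zero_neq_one)
  ultimately show ?thesis by (metis to_fract_eq_0_iff)
qed

lemma q_fact_nonzero: "q_fact n \<noteq> (0 :: 'a::field poly fract)"
  unfolding q_fact_def by (auto simp: q_int_nonzero)

lemma asm_alg_morphism_weighted:
  fixes s :: "nat \<Rightarrow> mat \<Rightarrow> nat" and E :: "nat set \<Rightarrow> nat \<Rightarrow> nat"
    and w :: "nat \<Rightarrow> 'a::field poly fract"
  assumes s_shuffle: "\<And>n1 n2 d1 d2 S. is_asm n1 d1 \<Longrightarrow> is_asm n2 d2 \<Longrightarrow> S \<in> shuffle_sets n1 n2 \<Longrightarrow>
      s (n1 + n2) (shuffle_mat n1 d1 d2 S) = s n1 d1 + s n2 d2 + E S (n1 + n2)"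
    and w_shuffle: "\<And>n1 n2. (\<Sum>S\<in>shuffle_sets n1 n2. qvar ^ E S (n1 + n2)) * w n1 * w n2 = w (n1 + n2)"
    and w_nonzero: "\<And>n. w n \<noteq> 0"
    and empty: "s 0 (\<lambda>_ _. 0) = 0" "w 0 = 1"
  shows "asm_alg_morphism (lin_ext (\<lambda>D. qvar ^ s (fst D) (snd D) / w (fst D)))"
proof (rule asm_alg_morphism_lin_ext)
  fix D1 D2 :: "nat \<times> mat" assume "D1 \<in> ASMs" "D2 \<in> ASMs"
  moreover obtain n1 d1 n2 d2 where D: "D1 = (n1, d1)" "D2 = (n2, d2)" by fastforce
  ultimately have d1: "is_asm n1 d1" and d2: "is_asm n2 d2" by (simp_all add: ASMs_def)
  have "(\<Sum>S\<in>shuffle_sets n1 n2. qvar ^ s (n1 + n2) (shuffle_mat n1 d1 d2 S) / w (n1 + n2))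
      = qvar ^ (s n1 d1 + s n2 d2) * (\<Sum>S\<in>shuffle_sets n1 n2. qvar ^ E S (n1 + n2)) / w (n1 + n2)"
    by (simp add: s_shuffle[OF d1 d2] power_add sum_distrib_left sum_divide_distrib)
  also have "\<dots> = (qvar ^ s n1 d1 / w n1) * (qvar ^ s n2 d2 / w n2)"
    using w_shuffle[of n1 n2] w_nonzero[of n1] w_nonzero[of n2] w_nonzero[of "n1 + n2"]
    by (auto simp: power_add simp flip: w_shuffle)
  finally show "(\<Sum>S\<in>shuffle_sets (fst D1) (fst D2). qvar ^ s (fst (asm_shuffle D1 D2 S))
        (snd (asm_shuffle D1 D2 S)) / w (fst (asm_shuffle D1 D2 S))) =
      qvar ^ s (fst D1) (snd D1) / w (fst D1) * (qvar ^ s (fst D2) (snd D2) / w (fst D2))"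
    using D by simp
qed (simp add: empty)

lemma asm_stats_empty:
  "asm_oi 0 (\<lambda>_ _. 0) = 0" "asm_io 0 (\<lambda>_ _. 0) = 0"
  "asm_ne 0 (\<lambda>_ _. 0) = 0" "asm_nw 0 (\<lambda>_ _. 0) = 0"
  "asm_se 0 (\<lambda>_ _. 0) = 0" "asm_sw 0 (\<lambda>_ _. 0) = 0"
  by (simp_all add: asm_oi_def asm_io_def asm_ne_def asm_nw_def asm_se_def asm_sw_def zero_type_def)

theorem proposition4p5:
  shows "(\<forall>s\<in>{asm_io, asm_oi}. asm_alg_morphism
            (lin_ext (\<lambda>D. (qvar :: 'a::field_char_0 poly fract) ^ (s (fst D) (snd D))
                           / of_nat (fact (fst D)))))
       \<and> (\<forall>s\<in>{asm_se, asm_nw, asm_sw, asm_ne}. asm_alg_morphism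
            (lin_ext (\<lambda>D. (qvar :: 'a poly fract) ^ (s (fst D) (snd D))
                           / q_fact (fst D))))"
  using asm_stats_empty of_nat_fact_fract_nonzero q_fact_nonzero card_shuffle_sets_fact
    shuffle_inversion_gf_q_binomial shuffle_inversion_gf_compl_q_binomial
  by (auto intro!: asm_alg_morphism_weighted
      simp: shuffle_inversion_gf_def asm_io_shuffle asm_oi_shuffle asm_se_shuffle asm_nw_shuffle
        asm_ne_shuffle asm_sw_shuffle)

end
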